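(* Let $T=(F_0,F_1)$ be the template of order $10$ and type $(4,4,4,4)$ (relational rows $0$–$3$, relational columns $0$–$3$) in which the entry in row $i$, column $j$ is the pair $F_0[i,j]F_1[i,j]$ given by row 0: 11 00 00 00 01 01 01 10 10 10; row 1: 00 11 00 00 01 01 01 10 10 10; row 2: 00 00 11 00 10 10 10 01 01 01; row 3: 00 00 00 11 10 10 10 01 01 01; row 4: 10 10 01 01 11 11 00 00 00 00; row 5: 10 10 01 01 11 11 00 00 00 00; row 6: 10 10 01 01 00 00 11 11 00 00; row 7: 01 01 10 10 00 00 11 11 00 00; row 8: 01 01 10 10 00 00 00 00 11 11; row 9: 01 01 10 10 00 00 00 00 11 11. Then there is no $4$-net of order $10$ that is a refinement of $T$.
   Context: A $k$-net of order $n$: a set of $n^2$ points and $kn$ lines (subsets of size $n$), each point on $k$ lines, lines partitioned into $k$ parallel classes $\Pi_0,\dots,\Pi_{k-1}$ of $n$ pairwise disjoint lines, lines from different classes meeting in exactly one point. For $n$ even and even $\lambda_i$, a template of order $n$ and type $(\lambda_0,\dots,\lambda_{k-1})$ is a list $(F_0,\dots,F_{k-3})$ of $n\times n$ $\{0,1\}$-arrays, $F_{t-2}$ having exactly $\lambda_t$ ones in each row and column, mutually orthogonal (for $F,F'$ with $\lambda,\mu$ ones per row, each pair $(a,b)$ occurs in exactly $f_af'_b$ cells with $f_1=\lambda,f_0=n-\lambda,f'_1=\mu,f'_0=n-\mu$), with rows $0,\dots,\lambda_0-1$ and columns $0,\dots,\lambda_1-1$ called relational, and such that for each cell $(i,j)$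 the number of ones among $x,y,F_0[i,j],\dots,F_{k-3}[i,j]$ (where $x=1$ iff row $i$ relational, $y=1$ iff column $j$ relational) is congruent to $\frac12\sum\lambda_i$ mod $2$. A $k$-net $N$ with parallel classes $\Pi_0,\dots,\Pi_{k-1}$ is a refinement of $T$ if the lines of $\Pi_0$ and $\Pi_1$ can be labelled $0,\dots,n-1$ so that, identifying each point with the cell (label of its $\Pi_0$-line, label of its $\Pi_1$-line), for every $t\ge 2$ each line of $\Pi_t$ consists of cells on which $F_{t-2}$ is constant. *)

theory Defs
  imports Main
begin

definition is_net :: "nat \<Rightarrow> nat \<Rightarrow> 'a set \<Rightarrow> (nat \<Rightarrow> 'a set set) \<Rightarrow> bool" where
  "is_net k n P Pi \<longleftrightarrow>
     finite P \<and> card P = n ^ 2 \<and>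
     (\<forall>t<k. card (Pi t) = n \<and> (\<forall>L\<in>Pi t. L \<subseteq> P \<and> card L = n)) \<and>
     (\<forall>t<k. \<forall>L\<in>Pi t. \<forall>M\<in>Pi t. L \<noteq> M \<longrightarrow> L \<inter> M = {}) \<and>
     (\<forall>t<k. \<forall>s<k. t \<noteq> s \<longrightarrow> Pi t \<inter> Pi s = {}) \<and>
     card (\<Union>t<k. Pi t) = k * n \<and>
     (\<forall>p\<in>P. card {L \<in> (\<Union>t<k. Pi t). p \<in> L} = k) \<and>
     (\<forall>t<k. \<forall>s<k. t \<noteq> s \<longrightarrow> (\<forall>L\<in>Pi t. \<forall>M\<in>Pi s. card (L \<inter> M) = 1))"

text \<open>A k-net (P, Pi) is a refinement of the template F = (F 0, ..., F (k-3)) of order n: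
  the lines of Pi 0 and Pi 1 can be labelled 0..n-1 (labellings l0, l1) so that for every t \<ge> 2
  each line of Pi t consists of cells on which F (t-2) is constant; the cell of a point p is (i,j)
  where p lies on l0 i and on l1 j.\<close>
definition is_refinement :: "nat \<Rightarrow> nat \<Rightarrow> (nat \<Rightarrow> nat \<Rightarrow> nat \<Rightarrow> nat) \<Rightarrow> 'a set \<Rightarrow> (nat \<Rightarrow> 'a set set) \<Rightarrow> bool" where
  "is_refinement k n F P Pi \<longleftrightarrow>
     (\<exists>l0 l1. bij_betw l0 {0..<n} (Pi 0) \<and> bij_betw l1 {0..<n} (Pi 1) \<and>
        (\<forall>t. 2 \<le> t \<and> t < k \<longrightarrow> (\<forall>L\<in>Pi t. \<forall>p\<in>L. \<forall>q\<in>L. \<forall>i j i' j'.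
            i < n \<and> j < n \<and> i' < n \<and> j' < n \<and>
            p \<in> l0 i \<and> p \<in> l1 j \<and> q \<in> l0 i' \<and> q \<in> l1 j' \<longrightarrow>
            F (t - 2) i j = F (t - 2) i' j')))"

text \<open>The template of order 10 and type (4,4,4,4): entry code ab stands for F_0[i,j]=a, F_1[i,j]=b
  (written as the decimal number 10a+b).\<close>
definition T_codes :: "nat list list" where
  "T_codes = [
    [11, 0, 0, 0, 1, 1, 1,10,10,10],
    [ 0,11, 0, 0, 1, 1, 1,10,10,10],
    [ 0, 0,11, 0,10,10,10, 1, 1, 1],
    [ 0, 0, 0,11,10,10,10, 1, 1, 1],
    [10,10, 1, 1,11,11, 0, 0, 0, 0],
    [10,10, 1, 1,11,11, 0, 0, 0, 0],
    [10,10, 1, 1, 0, 0,11,11, 0, 0],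
    [ 1, 1,10,10, 0, 0,11,11, 0, 0],
    [ 1, 1,10,10, 0, 0, 0, 0,11,11],
    [ 1, 1,10,10, 0, 0, 0, 0,11,11]]"

definition T_F :: "nat \<Rightarrow> nat \<Rightarrow> nat \<Rightarrow> nat" where
  "T_F m i j = (if m = 0 then (T_codes ! i ! j) div 10 else (T_codes ! i ! j) mod 10)"

end

theory Submission
  imports Defs
begin

(*
  Label the lines of the first two parallel classes so that points become cells (i, j); every line
  of a further class then meets each row and each column once, i.e. it is the graph of a
  permutation.  As F_1 is constant on the lines of the fourth class, the level set {F_1 = 1} is a
  union of such lines, so every line of another class meets it in the same number of points,
  which row 0 shows to be 4.  The line of the third class through cell (6, 6) lies in {F_0 = 1}
  and is the graph of a permutation fixing 6; counting how it fills the column blocks {0, 1},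
  {4, 5} and {2, 3} shows that it meets {F_1 = 1} in 4m + 2 cells, never in 4.
*)

lemma net_lineD:
  assumes "is_net k n P Pi" "t < k" "L \<in> Pi t"
  shows "L \<subseteq> P" "card L = n"
  using assms unfolding is_net_def by auto

lemma net_parallel_disjoint:
  assumes "is_net k n P Pi" "t < k" "L \<in> Pi t" "M \<in> Pi t" "L \<noteq> M"
  shows "L \<inter> M = {}"
  using assms unfolding is_net_def by blast

lemma net_card_meet:
  assumes "is_net k n P Pi" "t < k" "s < k" "t \<noteq> s" "L \<in> Pi t" "M \<in> Pi s"
  shows "card (L \<inter> M) = 1"
  using assms unfolding is_net_def by blast

lemma net_finite_line:
  assumes "is_net k n P Pi" "t < k" "L \<in> Pi t"
  shows "finite L"
proof (rule finite_subset)
  show "L \<subseteq> P" using net_lineD[OF assms] by simp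
  show "finite P" using assms(1) unfolding is_net_def by simp
qed

lemma net_finite_class:
  assumes "is_net k n P Pi" "t < k"
  shows "finite (Pi t)"
proof (rule finite_subset)
  show "Pi t \<subseteq> Pow P" using net_lineD[OF assms] by blast
  show "finite (Pow P)" using assms(1) unfolding is_net_def by simp
qed

lemma net_class_covers:
  assumes net: "is_net k n P Pi" and t: "t < k"
  shows "\<Union>(Pi t) = P"
proof (rule card_subset_eq)
  show "finite P" "\<Union>(Pi t) \<subseteq> P" using net net_lineD[OF net t] unfolding is_net_def by auto
  have "card (\<Union>(Pi t)) = (\<Sum>L\<in>Pi t. card L)"
  proof (rule card_Union_disjoint)
    show "pairwise disjnt (Pi t)"
      using net_parallel_disjoint[OF net t] by (auto simp: pairwise_def disjnt_def)
    show "finite L" if "L \<in> Pi t" for L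
      using net_finite_line[OF net t that] .
  qed
  also have "\<dots> = n * n" using net t net_lineD[OF net t] unfolding is_net_def by simp
  finally show "card (\<Union>(Pi t)) = card P"
    using net unfolding is_net_def by (simp add: power2_eq_square)
qed

lemma net_card_inter_Union:
  assumes net: "is_net k n P Pi" and "t < k" "s < k" "t \<noteq> s" "X \<in> Pi t" "\<M> \<subseteq> Pi s"
  shows "card (X \<inter> \<Union>\<M>) = card \<M>"
proof -
  have finite: "finite \<M>" using assms(6) net_finite_class[OF net \<open>s < k\<close>] by (rule finite_subset)
  have finite_parts: "\<forall>M\<in>\<M>. finite (X \<inter> M)"
    using net_finite_line[OF net \<open>t < k\<close> \<open>X \<in> Pi t\<close>] by simp
  have disjoint_parts: "\<forall>M\<in>\<M>. \<forall>M'\<in>\<M>. M \<noteq> M' \<longrightarrow> X \<inter> M \<inter> (X \<inter> M') = {}"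
  proof (intro ballI impI)
    fix M M' assume "M \<in> \<M>" "M' \<in> \<M>" "M \<noteq> M'"
    then have "M \<inter> M' = {}" using net_parallel_disjoint[OF net \<open>s < k\<close>] assms(6) by auto
    then show "X \<inter> M \<inter> (X \<inter> M') = {}" by auto
  qed
  have "card (X \<inter> \<Union>\<M>) = card (\<Union>M\<in>\<M>. X \<inter> M)"
    by (rule arg_cong[where f = card]) blast
  also have "\<dots> = (\<Sum>M\<in>\<M>. card (X \<inter> M))"
    by (rule card_UN_disjoint[OF finite finite_parts disjoint_parts])
  also have "\<dots> = (\<Sum>M\<in>\<M>. 1)"
    using net_card_meet[OF net \<open>t < k\<close> \<open>s < k\<close> \<open>t \<noteq> s\<close> \<open>X \<in> Pi t\<close>] assms(6)
    by (intro sum.cong) auto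
  finally show ?thesis by simp
qed

lemma sum_of_bool_preimage_eq_card:
  assumes bij: "bij_betw \<sigma> A B" and "K \<subseteq> B" "R \<subseteq> A" "finite R"
    and preimage: "\<And>i. i \<in> A \<Longrightarrow> \<sigma> i \<in> K \<Longrightarrow> i \<in> R"
  shows "(\<Sum>i\<in>R. of_bool (\<sigma> i \<in> K)) = card K"
proof -
  have "\<sigma> ` (R \<inter> {i. \<sigma> i \<in> K}) = K"
  proof
    show "K \<subseteq> \<sigma> ` (R \<inter> {i. \<sigma> i \<in> K})"
      using bij \<open>K \<subseteq> B\<close> preimage unfolding bij_betw_def by fastforce
  qed blast
  moreover have "inj_on \<sigma> (R \<inter> {i. \<sigma> i \<in> K})"
    using bij \<open>R \<subseteq> A\<close> unfolding bij_betw_def by (meson inj_on_subset le_infI1)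
  ultimately show ?thesis using \<open>finite R\<close> by (metis card_image sum_of_bool_eq of_nat_id)
qed

locale labelled_net =
  fixes k n :: nat and P :: "'a set" and Pi :: "nat \<Rightarrow> 'a set set"
    and row col :: "nat \<Rightarrow> 'a set"
  assumes net: "is_net k n P Pi" and two_le_k: "2 \<le> k"
    and bij_row: "bij_betw row {0..<n} (Pi 0)" and bij_col: "bij_betw col {0..<n} (Pi 1)"
begin

lemma row_in_class: "i < n \<Longrightarrow> row i \<in> Pi 0"
  using bij_row by (auto simp: bij_betw_def)

lemma col_in_class: "j < n \<Longrightarrow> col j \<in> Pi 1"
  using bij_col by (auto simp: bij_betw_def)

lemma row_unique:
  assumes "i < n" "i' < n" "p \<in> row i" "p \<in> row i'"
  shows "i = i'"
proof (rule ccontr)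
  assume "i \<noteq> i'"
  then have "row i \<noteq> row i'" using bij_row assms(1,2) by (auto simp: bij_betw_def inj_on_def)
  moreover have "0 < k" using two_le_k by simp
  ultimately have "row i \<inter> row i' = {}"
    using net_parallel_disjoint[OF net _ row_in_class row_in_class] assms(1,2) by blast
  then show False using assms(3,4) by blast
qed

lemma col_unique:
  assumes "j < n" "j' < n" "p \<in> col j" "p \<in> col j'"
  shows "j = j'"
proof (rule ccontr)
  assume "j \<noteq> j'"
  then have "col j \<noteq> col j'" using bij_col assms(1,2) by (auto simp: bij_betw_def inj_on_def)
  moreover have "1 < k" using two_le_k by simp
  ultimately have "col j \<inter> col j' = {}"
    using net_parallel_disjoint[OF net _ col_in_class col_in_class] assms(1,2) by blast
  then show False using assms(3,4) by blast
qed

definition cell :: "nat \<Rightarrow> nat \<Rightarrow> 'a" where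
  "cell i j = the_elem (row i \<inter> col j)"

lemma row_Int_col:
  assumes "i < n" "j < n"
  shows "row i \<inter> col j = {cell i j}"
proof -
  have "0 < k" "1 < k" using two_le_k by simp_all
  then have "card (row i \<inter> col j) = 1"
    using net_card_meet[OF net _ _ _ row_in_class[OF assms(1)] col_in_class[OF assms(2)]] by simp
  then obtain p where "row i \<inter> col j = {p}" by (metis One_nat_def card_1_singleton_iff)
  then show ?thesis unfolding cell_def by simp
qed

lemma cell_in_row: "i < n \<Longrightarrow> j < n \<Longrightarrow> cell i j \<in> row i"
  and cell_in_col: "i < n \<Longrightarrow> j < n \<Longrightarrow> cell i j \<in> col j"
  using row_Int_col by blast+

lemma cell_in_points:
  assumes "i < n" "j < n"
  shows "cell i j \<in> P"
proof -
  have "row i \<subseteq> P" using net_lineD(1)[OF net _ row_in_class[OF assms(1)]] two_le_k by simp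
  then show ?thesis using cell_in_row[OF assms] by blast
qed

lemma cell_inject:
  assumes "i < n" "j < n" "i' < n" "j' < n"
  shows "cell i j = cell i' j' \<longleftrightarrow> i = i' \<and> j = j'"
proof
  assume eq: "cell i j = cell i' j'"
  show "i = i' \<and> j = j'"
  proof
    show "i = i'"
      using row_unique[OF assms(1,3)] cell_in_row[OF assms(1,2)] cell_in_row[OF assms(3,4)] eq by simp
    show "j = j'"
      using col_unique[OF assms(2,4)] cell_in_col[OF assms(1,2)] cell_in_col[OF assms(3,4)] eq by simp
  qed
qed simp

lemma point_is_cell:
  assumes "p \<in> P"
  obtains i j where "i < n" "j < n" "p = cell i j"
proof -
  have "\<Union>(Pi 0) = P" "\<Union>(Pi 1) = P" using net_class_covers[OF net] two_le_k by simp_all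
  then obtain L M where "L \<in> Pi 0" "p \<in> L" "M \<in> Pi 1" "p \<in> M" using assms by blast
  moreover have "Pi 0 = row ` {0..<n}" "Pi 1 = col ` {0..<n}"
    using bij_row bij_col by (simp_all add: bij_betw_def)
  ultimately obtain i j where "i < n" "j < n" "p \<in> row i \<inter> col j" by auto
  then show thesis using that row_Int_col by simp
qed

definition cells_where :: "(nat \<Rightarrow> nat \<Rightarrow> bool) \<Rightarrow> 'a set" where
  "cells_where Q = {cell i j | i j. i < n \<and> j < n \<and> Q i j}"

lemma card_row_Int_cells_where:
  assumes "i < n"
  shows "card (row i \<inter> cells_where Q) = card {j. j < n \<and> Q i j}"
proof -
  have "row i \<inter> cells_where Q = cell i ` {j. j < n \<and> Q i j}"
  proof (intro equalityI subsetI)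
    fix p assume "p \<in> row i \<inter> cells_where Q"
    then obtain i' j where "i' < n" "j < n" "Q i' j" "p = cell i' j" "p \<in> row i"
      by (auto simp: cells_where_def)
    moreover from this have "i' = i" using row_unique[OF _ assms] cell_in_row by blast
    ultimately show "p \<in> cell i ` {j. j < n \<and> Q i j}" by blast
  next
    fix p assume "p \<in> cell i ` {j. j < n \<and> Q i j}"
    then show "p \<in> row i \<inter> cells_where Q"
      using assms cell_in_row by (auto simp: cells_where_def)
  qed
  moreover have "inj_on (cell i) {j. j < n \<and> Q i j}"
    using assms cell_inject by (auto intro: inj_onI)
  ultimately show ?thesis by (simp add: card_image)
qed

lemma line_meets_row_in_unique_cell:
  assumes t: "2 \<le> t" "t < k" and L: "L \<in> Pi t" and i: "i < n"
  shows "\<exists>!j. j < n \<and> cell i j \<in> L"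
proof -
  have "card (L \<inter> row i) = 1"
    using net_card_meet[OF net \<open>t < k\<close> _ _ L row_in_class[OF i]] t by simp
  then obtain p where p: "L \<inter> row i = {p}" by (metis One_nat_def card_1_singleton_iff)
  then have "p \<in> P" using net_lineD(1)[OF net \<open>t < k\<close> L] by blast
  then obtain i' j where j: "i' < n" "j < n" "p = cell i' j" by (rule point_is_cell)
  then have "i' = i" using row_unique[OF _ i] cell_in_row p by blast
  then have "j < n \<and> cell i j \<in> L" using j p by blast
  moreover have "j' = j" if "j' < n" "cell i j' \<in> L" for j'
  proof -
    have "cell i j' = cell i j" using p that cell_in_row[OF i] \<open>i' = i\<close> j by blast
    then show ?thesis using cell_inject[OF i that(1) i \<open>j < n\<close>] by simp
  qed
  ultimately show ?thesis by blast
qed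

lemma line_is_permutation_graph:
  assumes t: "2 \<le> t" "t < k" and L: "L \<in> Pi t"
  obtains \<sigma> where "bij_betw \<sigma> {..<n} {..<n}"
    "\<And>i j. i < n \<Longrightarrow> j < n \<Longrightarrow> cell i j \<in> L \<longleftrightarrow> \<sigma> i = j"
proof -
  note unique_in_row = line_meets_row_in_unique_cell[OF t L]
  define \<sigma> where "\<sigma> i = (THE j. j < n \<and> cell i j \<in> L)" for i
  have \<sigma>_in_L: "\<sigma> i < n \<and> cell i (\<sigma> i) \<in> L" if "i < n" for i
    unfolding \<sigma>_def using theI'[OF unique_in_row[OF that]] .
  have graph: "cell i j \<in> L \<longleftrightarrow> \<sigma> i = j" if "i < n" "j < n" for i j
    using \<sigma>_in_L[OF that(1)] unique_in_row[OF that(1)] that(2) by blast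
  have "inj_on \<sigma> {..<n}"
  proof (rule inj_onI)
    fix i i' assume i: "i \<in> {..<n}" "i' \<in> {..<n}" and eq: "\<sigma> i = \<sigma> i'"
    then have "\<sigma> i < n" using \<sigma>_in_L by simp
    then have "card (L \<inter> col (\<sigma> i)) = 1"
      using net_card_meet[OF net \<open>t < k\<close> _ _ L col_in_class] t by simp
    then obtain q where q: "L \<inter> col (\<sigma> i) = {q}" by (metis One_nat_def card_1_singleton_iff)
    have "cell i (\<sigma> i) \<in> L \<inter> col (\<sigma> i)" "cell i' (\<sigma> i) \<in> L \<inter> col (\<sigma> i)"
      using \<sigma>_in_L[of i] \<sigma>_in_L[of i'] cell_in_col i eq by auto
    then have "cell i (\<sigma> i) = cell i' (\<sigma> i)" using q by auto
    then show "i = i'" using cell_inject \<open>\<sigma> i < n\<close> i by simp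
  qed
  moreover have "\<sigma> ` {..<n} = {..<n}"
    using endo_inj_surj[OF _ _ calculation] \<sigma>_in_L by auto
  ultimately have "bij_betw \<sigma> {..<n} {..<n}" by (simp add: bij_betw_def)
  then show thesis using that graph by blast
qed

lemma card_line_Int_cells_where:
  assumes \<sigma>: "bij_betw \<sigma> {..<n} {..<n}"
    and graph: "\<And>i j. i < n \<Longrightarrow> j < n \<Longrightarrow> cell i j \<in> L \<longleftrightarrow> \<sigma> i = j"
  shows "card (L \<inter> cells_where Q) = card {i. i < n \<and> Q i (\<sigma> i)}"
proof -
  have range: "\<sigma> i < n" if "i < n" for i using \<sigma> that by (auto simp: bij_betw_def)
  have "L \<inter> cells_where Q = (\<lambda>i. cell i (\<sigma> i)) ` {i. i < n \<and> Q i (\<sigma> i)}"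
    using graph range by (auto simp: cells_where_def) blast
  moreover have "inj_on (\<lambda>i. cell i (\<sigma> i)) {i. i < n \<and> Q i (\<sigma> i)}"
    using cell_inject range by (auto intro: inj_onI)
  ultimately show ?thesis by (simp add: card_image)
qed

end

locale refined_net = labelled_net +
  fixes F :: "nat \<Rightarrow> nat \<Rightarrow> nat \<Rightarrow> nat"
  assumes F_constant_on_lines:
    "\<lbrakk>2 \<le> t; t < k; L \<in> Pi t; p \<in> L; q \<in> L; i < n; j < n; i' < n; j' < n;
      p \<in> row i; p \<in> col j; q \<in> row i'; q \<in> col j'\<rbrakk> \<Longrightarrow> F (t - 2) i j = F (t - 2) i' j'"

lemma refinement_obtains_refined_net:
  assumes "is_net k n P Pi" "2 \<le> k" "is_refinement k n F P Pi"
  obtains row col where "refined_net k n P Pi row col F"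
proof -
  obtain row col where bij: "bij_betw row {0..<n} (Pi 0)" "bij_betw col {0..<n} (Pi 1)"
    and constancy: "\<forall>t. 2 \<le> t \<and> t < k \<longrightarrow> (\<forall>L\<in>Pi t. \<forall>p\<in>L. \<forall>q\<in>L. \<forall>i j i' j'.
      i < n \<and> j < n \<and> i' < n \<and> j' < n \<and> p \<in> row i \<and> p \<in> col j \<and> q \<in> row i' \<and> q \<in> col j' \<longrightarrow>
      F (t - 2) i j = F (t - 2) i' j')"
    using assms(3) unfolding is_refinement_def by (elim exE conjE) (rule that; assumption)
  have "refined_net k n P Pi row col F"
  proof unfold_locales
    show "F (t - 2) i j = F (t - 2) i' j'"
      if "2 \<le> t" "t < k" "L \<in> Pi t" "p \<in> L" "q \<in> L" "i < n" "j < n" "i' < n" "j' < n"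
        "p \<in> row i" "p \<in> col j" "q \<in> row i'" "q \<in> col j'" for t L p q i j i' j'
      using constancy[rule_format, of t L p q i j i' j'] that by blast
  qed (fact assms bij)+
  then show thesis by (rule that)
qed

context refined_net
begin

lemma F_constant_on_cells:
  assumes "2 \<le> t" "t < k" "L \<in> Pi t" "i < n" "j < n" "i' < n" "j' < n"
    "cell i j \<in> L" "cell i' j' \<in> L"
  shows "F (t - 2) i j = F (t - 2) i' j'"
  by (rule F_constant_on_lines[OF assms(1-3,8,9,4-7)])
    (simp_all add: cell_in_row cell_in_col assms(4-7))

lemma level_set_Union_lines:
  fixes v :: nat
  assumes s: "2 \<le> s" "s < k"
  defines "C \<equiv> cells_where (\<lambda>i j. F (s - 2) i j = v)"
  shows "C = \<Union>{M \<in> Pi s. M \<subseteq> C}"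
proof (intro equalityI subsetI)
  fix p assume "p \<in> C"
  then obtain i j where ij: "i < n" "j < n" "p = cell i j" "F (s - 2) i j = v"
    by (auto simp: C_def cells_where_def)
  have "p \<in> \<Union>(Pi s)"
    using net_class_covers[OF net \<open>s < k\<close>] cell_in_points[OF ij(1,2)] ij(3) by simp
  then obtain M where M: "M \<in> Pi s" "p \<in> M" by blast
  have "M \<subseteq> C"
  proof
    fix q assume "q \<in> M"
    then have "q \<in> P" using net_lineD(1)[OF net \<open>s < k\<close> M(1)] by blast
    then obtain i' j' where ij': "i' < n" "j' < n" "q = cell i' j'" by (rule point_is_cell)
    have "F (s - 2) i' j' = F (s - 2) i j"
      using F_constant_on_cells[OF s M(1) ij'(1,2) ij(1,2)] M(2) \<open>q \<in> M\<close> ij(3) ij'(3) by blast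
    then show "q \<in> C" using ij ij' unfolding C_def cells_where_def by auto
  qed
  then show "p \<in> \<Union>{M \<in> Pi s. M \<subseteq> C}" using M by blast
next
  fix p assume "p \<in> \<Union>{M \<in> Pi s. M \<subseteq> C}"
  then show "p \<in> C" by blast
qed

lemma card_line_Int_level_set:
  fixes v :: nat
  assumes "2 \<le> s" "s < k" "t < k" "t \<noteq> s" "X \<in> Pi t"
  defines "C \<equiv> cells_where (\<lambda>i j. F (s - 2) i j = v)"
  shows "card (X \<inter> C) = card {M \<in> Pi s. M \<subseteq> C}"
proof -
  have "C = \<Union>{M \<in> Pi s. M \<subseteq> C}"
    unfolding C_def by (rule level_set_Union_lines[OF assms(1,2)])
  then have "card (X \<inter> C) = card (X \<inter> \<Union>{M \<in> Pi s. M \<subseteq> C})"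
    by (rule arg_cong[where f = "\<lambda>A. card (X \<inter> A)"])
  also have "\<dots> = card {M \<in> Pi s. M \<subseteq> C}"
    by (rule net_card_inter_Union[OF net assms(3,2,4,5)]) blast
  finally show ?thesis .
qed

end

lemma Collect_less_10: "{j. j < (10::nat) \<and> Q j} = {0,1,2,3,4,5,6,7,8,9} \<inter> {j. Q j}"
  by auto

lemma T_F0_ones_in_row:
  "{j. j < 10 \<and> T_F 0 0 j = 1} = {0,7,8,9}"
  "{j. j < 10 \<and> T_F 0 1 j = 1} = {1,7,8,9}"
  "{j. j < 10 \<and> T_F 0 2 j = 1} = {2,4,5,6}"
  "{j. j < 10 \<and> T_F 0 3 j = 1} = {3,4,5,6}"
  "{j. j < 10 \<and> T_F 0 4 j = 1} = {0,1,4,5}"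
  "{j. j < 10 \<and> T_F 0 5 j = 1} = {0,1,4,5}"
  "{j. j < 10 \<and> T_F 0 7 j = 1} = {2,3,6,7}"
  "{j. j < 10 \<and> T_F 0 8 j = 1} = {2,3,8,9}"
  "{j. j < 10 \<and> T_F 0 9 j = 1} = {2,3,8,9}"
  unfolding Collect_less_10 by (simp_all add: T_F_def T_codes_def insert_commute)

lemma T_F0_ones_in_column:
  "{i. i < 10 \<and> T_F 0 i 0 = 1} = {0,4,5,6}"
  "{i. i < 10 \<and> T_F 0 i 1 = 1} = {1,4,5,6}"
  "{i. i < 10 \<and> T_F 0 i 2 = 1} = {2,7,8,9}"
  "{i. i < 10 \<and> T_F 0 i 3 = 1} = {3,7,8,9}"
  "{i. i < 10 \<and> T_F 0 i 4 = 1} = {2,3,4,5}"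
  "{i. i < 10 \<and> T_F 0 i 5 = 1} = {2,3,4,5}"
  unfolding Collect_less_10 by (simp_all add: T_F_def T_codes_def insert_commute)

lemma T_F1_ones_in_row_0: "card {j. j < 10 \<and> T_F 1 0 j = 1} = 4"
proof -
  have "{j. j < 10 \<and> T_F 1 0 j = 1} = {0,4,5,6}"
    unfolding Collect_less_10 by (simp add: T_F_def T_codes_def)
  then show ?thesis by simp
qed

lemma T_F0_transversal_column_blocks:
  assumes \<sigma>: "bij_betw \<sigma> {..<10} {..<10}" and \<sigma>6: "\<sigma> 6 = 6"
    and ones: "\<And>i. i < 10 \<Longrightarrow> T_F 0 i (\<sigma> i) = 1"
  shows "(\<Sum>i\<in>{0,1,4,5}. of_bool (\<sigma> i \<in> {0,1})) = (2::nat)"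
    and "(\<Sum>i\<in>{2,3,4,5}. of_bool (\<sigma> i \<in> {4,5})) = (2::nat)"
    and "(\<Sum>i\<in>{2,3,7,8,9}. of_bool (\<sigma> i \<in> {2,3})) = (2::nat)"
proof -
  have in_column: "i \<in> {i. i < 10 \<and> T_F 0 i j = 1}" if "i < 10" "\<sigma> i = j" for i j
    using ones that by auto
  have "(\<Sum>i\<in>{0,1,4,5}. of_bool (\<sigma> i \<in> {0,1})) = card {0,1::nat}"
  proof (rule sum_of_bool_preimage_eq_card[OF \<sigma>])
    show "i \<in> {0,1,4,5}" if "i \<in> {..<10}" "\<sigma> i \<in> {0,1}" for i
      using in_column[of i 0, unfolded T_F0_ones_in_column]
        in_column[of i 1, unfolded T_F0_ones_in_column] that \<sigma>6 by auto
  qed auto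
  then show "(\<Sum>i\<in>{0,1,4,5}. of_bool (\<sigma> i \<in> {0,1})) = (2::nat)" by simp
  have "(\<Sum>i\<in>{2,3,4,5}. of_bool (\<sigma> i \<in> {4,5})) = card {4,5::nat}"
  proof (rule sum_of_bool_preimage_eq_card[OF \<sigma>])
    show "i \<in> {2,3,4,5}" if "i \<in> {..<10}" "\<sigma> i \<in> {4,5}" for i
      using in_column[of i 4, unfolded T_F0_ones_in_column]
        in_column[of i 5, unfolded T_F0_ones_in_column] that by auto
  qed auto
  then show "(\<Sum>i\<in>{2,3,4,5}. of_bool (\<sigma> i \<in> {4,5})) = (2::nat)" by simp
  have "(\<Sum>i\<in>{2,3,7,8,9}. of_bool (\<sigma> i \<in> {2,3})) = card {2,3::nat}"
  proof (rule sum_of_bool_preimage_eq_card[OF \<sigma>])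
    show "i \<in> {2,3,7,8,9}" if "i \<in> {..<10}" "\<sigma> i \<in> {2,3}" for i
      using in_column[of i 2, unfolded T_F0_ones_in_column]
        in_column[of i 3, unfolded T_F0_ones_in_column] that \<sigma>6 by auto
  qed auto
  then show "(\<Sum>i\<in>{2,3,7,8,9}. of_bool (\<sigma> i \<in> {2,3})) = (2::nat)" by simp
qed

lemma card_T_F1_ones_on_T_F0_transversal_ne_4:
  assumes \<sigma>: "bij_betw \<sigma> {..<10} {..<10}" and \<sigma>6: "\<sigma> 6 = 6"
    and ones: "\<And>i. i < 10 \<Longrightarrow> T_F 0 i (\<sigma> i) = 1"
  shows "card {i. i < 10 \<and> T_F 1 i (\<sigma> i) = 1} \<noteq> 4"
proof -
  have in_row: "\<sigma> i \<in> {j. j < 10 \<and> T_F 0 i j = 1}" if "i < 10" for i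
    using ones[OF that] \<sigma> that by (auto simp: bij_betw_def)
  have not_6: "\<sigma> i \<noteq> 6" if "i < 10" "i \<noteq> 6" for i
    using \<sigma> \<sigma>6 that by (auto simp: bij_betw_def inj_on_def)
  define x where "x i = (of_bool (T_F 1 i (\<sigma> i) = 1) :: nat)" for i
  have x0: "x 0 = of_bool (\<sigma> 0 \<in> {0,1})"
    using in_row[of 0, unfolded T_F0_ones_in_row] by (auto simp: x_def T_F_def T_codes_def)
  have x1: "x 1 = of_bool (\<sigma> 1 \<in> {0,1})"
    using in_row[of 1, unfolded T_F0_ones_in_row] by (auto simp: x_def T_F_def T_codes_def)
  have x2: "x 2 = of_bool (\<sigma> 2 \<in> {2,3})" "of_bool (\<sigma> 2 \<in> {4,5}) + x 2 = 1"
    using in_row[of 2, unfolded T_F0_ones_in_row] not_6[of 2] by (auto simp: x_def T_F_def T_codes_def)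
  have x3: "x 3 = of_bool (\<sigma> 3 \<in> {2,3})" "of_bool (\<sigma> 3 \<in> {4,5}) + x 3 = 1"
    using in_row[of 3, unfolded T_F0_ones_in_row] not_6[of 3] by (auto simp: x_def T_F_def T_codes_def)
  have x4: "x 4 = of_bool (\<sigma> 4 \<in> {4,5})" "of_bool (\<sigma> 4 \<in> {0,1}) + x 4 = 1"
    using in_row[of 4, unfolded T_F0_ones_in_row] by (auto simp: x_def T_F_def T_codes_def)
  have x5: "x 5 = of_bool (\<sigma> 5 \<in> {4,5})" "of_bool (\<sigma> 5 \<in> {0,1}) + x 5 = 1"
    using in_row[of 5, unfolded T_F0_ones_in_row] by (auto simp: x_def T_F_def T_codes_def)
  have x6: "x 6 = 1"
    using \<sigma>6 by (simp add: x_def T_F_def T_codes_def)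
  have x7: "of_bool (\<sigma> 7 \<in> {2,3}) + x 7 = 1"
    using in_row[of 7, unfolded T_F0_ones_in_row] not_6[of 7] by (auto simp: x_def T_F_def T_codes_def)
  have x8: "of_bool (\<sigma> 8 \<in> {2,3}) + x 8 = 1"
    using in_row[of 8, unfolded T_F0_ones_in_row] by (auto simp: x_def T_F_def T_codes_def)
  have x9: "of_bool (\<sigma> 9 \<in> {2,3}) + x 9 = 1"
    using in_row[of 9, unfolded T_F0_ones_in_row] by (auto simp: x_def T_F_def T_codes_def)
  note blocks = T_F0_transversal_column_blocks[OF \<sigma> \<sigma>6 ones]
  have "card {i. i < 10 \<and> T_F 1 i (\<sigma> i) = 1} = (\<Sum>i<10. x i)"
    by (simp add: x_def lessThan_def Collect_conj_eq)
  also have "\<dots> = x 0 + x 1 + x 2 + x 3 + x 4 + x 5 + x 6 + x 7 + x 8 + x 9"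
    by (simp add: lessThan_nat_numeral)
  also have "\<dots> = 4 * (x 4 + x 5) + 2"
    using blocks x0 x1 x2 x3 x4 x5 x6 x7 x8 x9 by simp
  finally show ?thesis by presburger
qed

theorem mainTheorem5:
  fixes P :: "'a set" and Pi :: "nat \<Rightarrow> 'a set set"
  shows "\<not> (is_net 4 10 P Pi \<and> is_refinement 4 10 T_F P Pi)"
proof
  assume "is_net 4 10 P Pi \<and> is_refinement 4 10 T_F P Pi"
  then obtain row col where "refined_net 4 10 P Pi row col T_F"
    by (elim conjE refinement_obtains_refined_net) simp_all
  then interpret refined_net 4 10 P Pi row col T_F .
  let ?ones = "cells_where (\<lambda>i j. T_F (3 - 2) i j = 1)"
  have "cell 6 6 \<in> \<Union>(Pi 2)" using net_class_covers[OF net, of 2] cell_in_points[of 6 6] by simp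
  then obtain L where L: "L \<in> Pi 2" "cell 6 6 \<in> L" by blast
  obtain \<sigma> where \<sigma>: "bij_betw \<sigma> {..<10} {..<10}"
    and graph: "\<And>i j. i < 10 \<Longrightarrow> j < 10 \<Longrightarrow> cell i j \<in> L \<longleftrightarrow> \<sigma> i = j"
    by (rule line_is_permutation_graph[OF _ _ L(1)]) simp_all
  have \<sigma>6: "\<sigma> 6 = 6" using graph[of 6 6] L(2) by simp
  have ones: "T_F 0 i (\<sigma> i) = 1" if "i < 10" for i
  proof -
    have "\<sigma> i < 10" using \<sigma> that by (auto simp: bij_betw_def)
    then have "T_F (2 - 2) i (\<sigma> i) = T_F (2 - 2) 6 6"
      by (intro F_constant_on_cells[OF _ _ L(1)]) (use L(2) graph[of i "\<sigma> i"] that in simp_all)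
    then show ?thesis by (simp add: T_F_def T_codes_def)
  qed
  have "card (L \<inter> ?ones) = card (row 0 \<inter> ?ones)"
    using card_line_Int_level_set[of 3 2 L] card_line_Int_level_set[of 3 0 "row 0"] L(1) row_in_class[of 0]
    by simp
  then have "card {i. i < 10 \<and> T_F 1 i (\<sigma> i) = 1} = card {j. j < 10 \<and> T_F 1 0 j = 1}"
    using card_line_Int_cells_where[OF \<sigma> graph] card_row_Int_cells_where[of 0] by simp
  then show False
    using T_F1_ones_in_row_0 card_T_F1_ones_on_T_F0_transversal_ne_4[OF \<sigma> \<sigma>6 ones] by simp
qed

end
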